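(* Let $S\subseteq N$ be a maximal $1$-switchable set. Then for all $a\in S$ and all $b\in N$, ${\rm s}(1,a,b)\in S$; that is, every element of $N$ that differs from an element of $S$ in at most the first component is also in $S$.
   Context: Fix positive integers $n, r_1,\dots,r_n$, let $N=[r_1]\times\cdots\times[r_n]$, and let $R$ be the polynomial ring over a field in the variables $x_a$, $a\in N$. For $a,b\in N$ and $i\in[n]$, ${\rm s}(i,a,b)\in N$ has $i$-th component $b_i$ and other components equal to those of $a$. Let $d(a,b)=\#\{j: a_j\neq b_j\}$ and $f_{i,a,b}=x_ax_b-x_{{\rm s}(i,a,b)}x_{{\rm s}(i,b,a)}$. A subset $S\subseteq N$ is $1$-switchable if for all $a,b\in S$ with $d(a,b)=2$, ${\rm s}(1,a,b)\in S$. Elements $a,b\in S$ are connected in $S$ if there are $a_0=a,\dots,a_k=b$ in $S$ with $d(a_{j-1},a_j)\le 1$ for all $j$. For $1$-switchable $S$: $\tilde{\mathcal{I}}^{\langle 1\rangle}_S=(f_{1,a,b}: a,b \text{ connected in } S)$, $\mathrm{Var}^{\langle 1\rangle}_S=(x_a: a\notin S)$, $P^{\langle 1\rangle}_S=\mathrm{Var}^{\langle 1\rangle}_S+\tilde{\mathcal{I}}^{\langle 1\rangle}_S$. A $1$-switchable $S$ is maximal $1$-switchable if for every $1$-switchable $T$ properly containing $S$, $P^{\langle 1\rangle}_S$ and $P^{\langle 1\rangle}_T$ are incomparable under inclusion. *)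

theory Defs
  imports "HOL-Library.Poly_Mapping"
begin

text \<open>Component i of the paper
 is list index i-1, so the "first component" is index 0.\<close>

definition gridN :: "nat list \<Rightarrow> nat list set" where
  "gridN r = {a. length a = length r \<and> (\<forall>j<length r. 1 \<le> a ! j \<and> a ! j \<le> r ! j)}"

definition sw :: "nat \<Rightarrow> nat list \<Rightarrow> nat list \<Rightarrow> nat list" where
  "sw i a b = a[i := b ! i]"

definition dist_h :: "nat list \<Rightarrow> nat list \<Rightarrow> nat" where
  "dist_h a b = card {j. j < length a \<and> a ! j \<noteq> b ! j}"

definition one_switchable :: "nat list \<Rightarrow> nat list set \<Rightarrow> bool" where
  "one_switchable r S \<longleftrightarrow> S \<subseteq> gridN r \<and>
     (\<forall>a\<in>S. \<forall>b\<in>S. dist_h a b = 2 \<longrightarrow> sw 0 a b \<in> S)"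

definition connected_in :: "nat list set \<Rightarrow> nat list \<Rightarrow> nat list \<Rightarrow> bool" where
  "connected_in S a b \<longleftrightarrow> a \<in> S \<and> b \<in> S \<and>
     (\<lambda>x y. x \<in> S \<and> y \<in> S \<and> dist_h x y \<le> 1)\<^sup>*\<^sup>* a b"

text \<open>The polynomial ring R = k[x_a : a \<in> N], as polynomials (finitely supported maps from
 monomials to coefficients) all of whose monomials only involve variables from N.\<close>
type_synonym 'k mpoly = "(nat list \<Rightarrow>\<^sub>0 nat) \<Rightarrow>\<^sub>0 'k"

definition polyRing :: "nat list \<Rightarrow> ('k::field) mpoly set" where
  "polyRing r = {p. \<forall>m \<in> Poly_Mapping.keys p. Poly_Mapping.keys m \<subseteq> gridN r}"

definition var :: "nat list \<Rightarrow> ('k::field) mpoly" where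
  "var a = Poly_Mapping.single (Poly_Mapping.single a 1) 1"

definition ideal_gen :: "nat list \<Rightarrow> ('k::field) mpoly set \<Rightarrow> 'k mpoly set" where
  "ideal_gen r G = {(\<Sum>g\<in>F. c g * g) | F c. finite F \<and> F \<subseteq> G \<and> (\<forall>g\<in>F. c g \<in> polyRing r)}"

definition f_bin :: "nat \<Rightarrow> nat list \<Rightarrow> nat list \<Rightarrow> ('k::field) mpoly" where
  "f_bin i a b = var a * var b - var (sw i a b) * var (sw i b a)"

definition P_ideal :: "'k itself \<Rightarrow> nat list \<Rightarrow> nat list set \<Rightarrow> ('k::field) mpoly set" where
  "P_ideal _ r S = ideal_gen r ({var a | a. a \<in> gridN r \<and> a \<notin> S}
                               \<union> {f_bin 0 a b | a b. connected_in S a b})"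

definition maximal_one_switchable :: "('k::field) itself \<Rightarrow> nat list \<Rightarrow> nat list set \<Rightarrow> bool" where
  "maximal_one_switchable K r S \<longleftrightarrow> one_switchable r S \<and>
     (\<forall>T. one_switchable r T \<and> S \<subset> T \<longrightarrow>
        \<not> (P_ideal K r S \<subseteq> P_ideal K r T) \<and> \<not> (P_ideal K r T \<subseteq> P_ideal K r S))"

end

theory Submission
  imports Defs
begin

text \<open>Let T be the set of grid points that agree with some point of S outside the first
coordinate. T is trivially 1-switchable and contains S. A path in T with endpoints in S
descends to a path in S: consecutive points of T lie over points of S differing in at most
two coordinates, one of them the first, and these are joined inside S through the switch
that S is closed under. Hence every binomial generator of P_T lies in P_S: either its
monomials involve a variable outside S, or it is (up to sign) a binomial of two points of S
connected in S. So P_T \<subseteq> P_S, and maximality forces T = S.\<close>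

lemma polyRing_add:
  assumes "p \<in> polyRing r" and "q \<in> polyRing r"
  shows "p + q \<in> polyRing r"
  unfolding polyRing_def
proof (intro CollectI ballI)
  fix m assume "m \<in> Poly_Mapping.keys (p + q)"
  then have "m \<in> Poly_Mapping.keys p \<or> m \<in> Poly_Mapping.keys q"
    using keys_add[of p q] by blast
  then show "Poly_Mapping.keys m \<subseteq> gridN r" using assms unfolding polyRing_def by blast
qed

lemma polyRing_mult:
  assumes "p \<in> polyRing r" and "q \<in> polyRing r"
  shows "p * q \<in> polyRing r"
  unfolding polyRing_def
proof (intro CollectI ballI)
  fix m assume "m \<in> Poly_Mapping.keys (p * q)"
  then obtain a b where "m = a + b" "a \<in> Poly_Mapping.keys p" "b \<in> Poly_Mapping.keys q"
    using keys_mult by blast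
  then show "Poly_Mapping.keys m \<subseteq> gridN r"
    using assms keys_add[of a b] unfolding polyRing_def by blast
qed

lemma polyRing_zero: "0 \<in> polyRing r"
  unfolding polyRing_def by simp

lemma polyRing_one: "1 \<in> polyRing r"
  unfolding polyRing_def by simp

lemma polyRing_uminus: "p \<in> polyRing r \<Longrightarrow> - p \<in> polyRing r"
  unfolding polyRing_def by simp

lemma polyRing_var: "a \<in> gridN r \<Longrightarrow> (var a :: 'k::field mpoly) \<in> polyRing r"
  unfolding polyRing_def var_def by simp

lemma ideal_gen_zero: "0 \<in> ideal_gen r G"
  unfolding ideal_gen_def by (rule CollectI, rule exI[of _ "{}"]) auto

lemma ideal_gen_base: "g \<in> G \<Longrightarrow> (g::'k::field mpoly) \<in> ideal_gen r G"
  unfolding ideal_gen_def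
  by (rule CollectI, rule exI[of _ "{g}"], rule exI[of _ "\<lambda>_. 1"]) (auto simp: polyRing_one)

lemma ideal_gen_add:
  assumes "x \<in> ideal_gen r G" and "y \<in> ideal_gen r G"
  shows "(x::'k::field mpoly) + y \<in> ideal_gen r G"
proof -
  obtain F c where x: "x = (\<Sum>g\<in>F. c g * g)" "finite F" "F \<subseteq> G" "\<forall>g\<in>F. c g \<in> polyRing r"
    using assms(1) unfolding ideal_gen_def by blast
  obtain F' c' where y: "y = (\<Sum>g\<in>F'. c' g * g)" "finite F'" "F' \<subseteq> G" "\<forall>g\<in>F'. c' g \<in> polyRing r"
    using assms(2) unfolding ideal_gen_def by blast
  define d where "d g = (if g \<in> F then c g else 0) + (if g \<in> F' then c' g else 0)" for g
  have x_ext: "(\<Sum>g\<in>F \<union> F'. (if g \<in> F then c g else 0) * g) = x"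
    unfolding x(1) by (rule sum.mono_neutral_cong_right) (use x y in auto)
  have y_ext: "(\<Sum>g\<in>F \<union> F'. (if g \<in> F' then c' g else 0) * g) = y"
    unfolding y(1) by (rule sum.mono_neutral_cong_right) (use x y in auto)
  have "x + y = (\<Sum>g\<in>F \<union> F'. d g * g)"
    unfolding x_ext[symmetric] y_ext[symmetric] sum.distrib[symmetric] d_def
    by (simp add: distrib_right)
  moreover have "\<forall>g\<in>F \<union> F'. d g \<in> polyRing r"
    using x(4) y(4) by (auto simp: d_def polyRing_add polyRing_zero)
  ultimately show ?thesis
    unfolding ideal_gen_def by (intro CollectI exI[of _ "F \<union> F'"] exI[of _ d]) (use x y in auto)
qed

lemma ideal_gen_mult:
  assumes "x \<in> ideal_gen r G" and "p \<in> polyRing r"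
  shows "p * (x::'k::field mpoly) \<in> ideal_gen r G"
proof -
  obtain F c where x: "x = (\<Sum>g\<in>F. c g * g)" "finite F" "F \<subseteq> G" "\<forall>g\<in>F. c g \<in> polyRing r"
    using assms(1) unfolding ideal_gen_def by blast
  have "p * x = (\<Sum>g\<in>F. (p * c g) * g)"
    unfolding x(1) by (simp add: sum_distrib_left mult.assoc)
  moreover have "\<forall>g\<in>F. p * c g \<in> polyRing r"
    using x(4) assms(2) polyRing_mult by blast
  ultimately show ?thesis
    unfolding ideal_gen_def by (intro CollectI exI[of _ F] exI[of _ "\<lambda>g. p * c g"]) (use x in auto)
qed

lemma ideal_gen_uminus: "x \<in> ideal_gen r G \<Longrightarrow> - (x::'k::field mpoly) \<in> ideal_gen r G"
  using ideal_gen_mult[OF _ polyRing_uminus[OF polyRing_one]] by fastforce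

lemma ideal_gen_diff:
  "x \<in> ideal_gen r G \<Longrightarrow> y \<in> ideal_gen r G \<Longrightarrow> (x::'k::field mpoly) - y \<in> ideal_gen r G"
  using ideal_gen_add[of x r G "- y"] ideal_gen_uminus by auto

lemma ideal_gen_subset_ideal_gen:
  assumes "G \<subseteq> ideal_gen r H"
  shows "ideal_gen r (G::'k::field mpoly set) \<subseteq> ideal_gen r H"
proof
  fix x assume "x \<in> ideal_gen r G"
  then obtain F c where x: "x = (\<Sum>g\<in>F. c g * g)" "finite F" "F \<subseteq> G" "\<forall>g\<in>F. c g \<in> polyRing r"
    unfolding ideal_gen_def by blast
  have "F \<subseteq> G \<longrightarrow> (\<forall>g\<in>F. c g \<in> polyRing r) \<longrightarrow> (\<Sum>g\<in>F. c g * g) \<in> ideal_gen r H"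
    using x(2)
  proof (induction F rule: finite_induct)
    case empty
    then show ?case by (simp add: ideal_gen_zero)
  next
    case (insert g F)
    then show ?case using assms by (auto intro!: ideal_gen_add ideal_gen_mult)
  qed
  then show "x \<in> ideal_gen r H" using x by blast
qed

lemma var_in_P_ideal:
  "a \<in> gridN r \<Longrightarrow> a \<notin> S \<Longrightarrow> (var a :: 'k::field mpoly) \<in> P_ideal TYPE('k) r S"
  unfolding P_ideal_def by (rule ideal_gen_base) blast

lemma f_bin_in_P_ideal:
  "connected_in S a b \<Longrightarrow> (f_bin 0 a b :: 'k::field mpoly) \<in> P_ideal TYPE('k) r S"
  unfolding P_ideal_def by (rule ideal_gen_base) blast

lemma P_ideal_mult: "x \<in> P_ideal K r S \<Longrightarrow> p \<in> polyRing r \<Longrightarrow> p * x \<in> P_ideal K r S"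
  unfolding P_ideal_def by (rule ideal_gen_mult)

lemma P_ideal_uminus: "x \<in> P_ideal K r S \<Longrightarrow> - x \<in> P_ideal K r S"
  unfolding P_ideal_def by (rule ideal_gen_uminus)

lemma P_ideal_diff: "x \<in> P_ideal K r S \<Longrightarrow> y \<in> P_ideal K r S \<Longrightarrow> x - y \<in> P_ideal K r S"
  unfolding P_ideal_def by (rule ideal_gen_diff)

lemma var_mult_var_in_P_ideal:
  assumes "a \<in> gridN r" and "b \<in> gridN r" and "a \<notin> S \<or> b \<notin> S"
  shows "(var a * var b :: 'k::field mpoly) \<in> P_ideal TYPE('k) r S"
  using assms(3)
proof
  assume "a \<notin> S"
  then have "var b * (var a :: 'k mpoly) \<in> P_ideal TYPE('k) r S"
    using P_ideal_mult var_in_P_ideal[OF assms(1)] polyRing_var[OF assms(2)] by blast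
  then show ?thesis by (simp only: mult.commute)
next
  assume "b \<notin> S"
  then show ?thesis
    using P_ideal_mult var_in_P_ideal[OF assms(2)] polyRing_var[OF assms(1)] by blast
qed

lemma P_ideal_subset_P_ideal:
  assumes "\<And>a. a \<in> gridN r \<Longrightarrow> a \<notin> T \<Longrightarrow> var a \<in> P_ideal K r S"
    and "\<And>a b. connected_in T a b \<Longrightarrow> f_bin 0 a b \<in> P_ideal K r S"
  shows "P_ideal K r T \<subseteq> P_ideal K r (S::nat list set)"
  using assms unfolding P_ideal_def by (intro ideal_gen_subset_ideal_gen) blast

definition diff_positions :: "nat list \<Rightarrow> nat list \<Rightarrow> nat set" where
  "diff_positions a b = {j. j < length a \<and> a ! j \<noteq> b ! j}"

lemma dist_h_eq_card: "dist_h a b = card (diff_positions a b)"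
  unfolding dist_h_def diff_positions_def ..

lemma dist_h_le_card: "diff_positions a b \<subseteq> D \<Longrightarrow> finite D \<Longrightarrow> dist_h a b \<le> card D"
  unfolding dist_h_eq_card by (rule card_mono)

lemma dist_h_le_1_obtain:
  assumes "dist_h a b \<le> 1"
  obtains j where "diff_positions a b \<subseteq> {j}"
proof -
  have "finite (diff_positions a b)" unfolding diff_positions_def by simp
  then have "\<forall>i\<in>diff_positions a b. \<forall>i'\<in>diff_positions a b. i = i'"
    using assms card_le_Suc0_iff_eq unfolding dist_h_eq_card by auto
  then show ?thesis using that by (cases "diff_positions a b = {}") blast+
qed

lemma length_sw [simp]: "length (sw i a b) = length a"
  unfolding sw_def by simp

lemma nth_sw0: "j < length a \<Longrightarrow> sw 0 a b ! j = (if j = 0 then b ! 0 else a ! j)"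
  unfolding sw_def by (cases "j = 0") auto

lemma sw0_in_gridN: "a \<in> gridN r \<Longrightarrow> b \<in> gridN r \<Longrightarrow> sw 0 a b \<in> gridN r"
  unfolding gridN_def by (auto simp: nth_sw0)

lemma diff_positions_sw0: "diff_positions a (sw 0 a b) \<subseteq> {0}"
  unfolding diff_positions_def by (auto simp: nth_sw0 split: if_splits)

lemma sw_sw_swap: "length a = length b \<Longrightarrow> sw i (sw i a b) (sw i b a) = a"
  unfolding sw_def by (cases "i < length a") (simp_all add: list_update_beyond)

lemma f_bin_sw_swap:
  assumes "length a = length b"
  shows "(f_bin i (sw i a b) (sw i b a) :: 'k::field mpoly) = - f_bin i a b"
proof -
  have "sw i (sw i a b) (sw i b a) = a" "sw i (sw i b a) (sw i a b) = b"
    using assms sw_sw_swap by metis+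
  then show ?thesis unfolding f_bin_def by (simp add: mult.commute)
qed

lemma connected_in_trans: "connected_in S a b \<Longrightarrow> connected_in S b c \<Longrightarrow> connected_in S a c"
  unfolding connected_in_def by (meson rtranclp_trans)

lemma connected_in_if_dist_h_le_1:
  "a \<in> S \<Longrightarrow> b \<in> S \<Longrightarrow> dist_h a b \<le> 1 \<Longrightarrow> connected_in S a b"
  unfolding connected_in_def by (auto intro: r_into_rtranclp)

lemma connected_in_if_diff_positions_0:
  assumes S: "one_switchable r S" and a: "a \<in> S" and b: "b \<in> S"
    and ab: "diff_positions a b \<subseteq> {0, j}"
  shows "connected_in S a b"
proof (cases "dist_h a b \<le> 1")
  case True
  then show ?thesis using connected_in_if_dist_h_le_1 a b by blast
next
  case False
  have "dist_h a b \<le> card {0, j}" using dist_h_le_card[OF ab] by simp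
  also have "\<dots> \<le> 2" by (cases "j = 0") auto
  finally have "dist_h a b = 2" using False by simp
  then have c: "sw 0 a b \<in> S" using S a b unfolding one_switchable_def by blast
  have "dist_h a (sw 0 a b) \<le> 1"
    using dist_h_le_card[OF diff_positions_sw0] by simp
  moreover have "diff_positions (sw 0 a b) b \<subseteq> {j}"
    using ab unfolding diff_positions_def by (auto simp: nth_sw0 split: if_splits)
  then have "dist_h (sw 0 a b) b \<le> 1" using dist_h_le_card[of _ b "{j}"] by simp
  ultimately show ?thesis
    using connected_in_trans connected_in_if_dist_h_le_1 a b c by blast
qed

definition eq_except0 :: "nat list \<Rightarrow> nat list \<Rightarrow> bool" where
  "eq_except0 a b \<longleftrightarrow> length a = length b \<and> (\<forall>i<length a. 0 < i \<longrightarrow> a ! i = b ! i)"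

lemma eq_except0_refl: "eq_except0 a a"
  unfolding eq_except0_def by simp

lemma eq_except0_sym: "eq_except0 a b \<Longrightarrow> eq_except0 b a"
  unfolding eq_except0_def by auto

lemma eq_except0_sw0: "eq_except0 a b \<Longrightarrow> eq_except0 a (sw 0 b c)"
  unfolding eq_except0_def by (auto simp: nth_sw0)

lemma dist_h_le_1_if_eq_except0: "eq_except0 a b \<Longrightarrow> dist_h a b \<le> 1"
  using dist_h_le_card[of a b "{0}"] unfolding eq_except0_def diff_positions_def by fastforce

lemma diff_positions_eq_except0:
  assumes "eq_except0 a c" and "eq_except0 b d" and "length c = length d"
    and "diff_positions c d \<subseteq> {j}"
  shows "diff_positions a b \<subseteq> {0, j}"
proof
  fix i assume i: "i \<in> diff_positions a b"
  show "i \<in> {0, j}"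
  proof (rule ccontr)
    assume "i \<notin> {0, j}"
    with i assms have "a ! i = c ! i" "b ! i = d ! i" "c ! i = d ! i"
      unfolding eq_except0_def diff_positions_def by auto
    with i show False unfolding diff_positions_def by simp
  qed
qed

definition saturation0 :: "nat list \<Rightarrow> nat list set \<Rightarrow> nat list set" where
  "saturation0 r S = {x \<in> gridN r. \<exists>s\<in>S. eq_except0 s x}"

lemma subset_saturation0: "S \<subseteq> gridN r \<Longrightarrow> S \<subseteq> saturation0 r S"
  unfolding saturation0_def using eq_except0_refl by blast

lemma sw0_in_saturation0:
  "a \<in> saturation0 r S \<Longrightarrow> b \<in> gridN r \<Longrightarrow> sw 0 a b \<in> saturation0 r S"
  unfolding saturation0_def using sw0_in_gridN eq_except0_sw0 by blast

lemma one_switchable_saturation0: "one_switchable r (saturation0 r S)"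
proof -
  have "saturation0 r S \<subseteq> gridN r" unfolding saturation0_def by blast
  then show ?thesis
    unfolding one_switchable_def using sw0_in_saturation0 by blast
qed

lemma connected_in_saturation0:
  assumes S: "one_switchable r S" and a: "a \<in> S" and b: "b \<in> S"
    and ab: "connected_in (saturation0 r S) a b"
  shows "connected_in S a b"
proof -
  let ?T = "saturation0 r S"
  have "(\<lambda>x y. x \<in> ?T \<and> y \<in> ?T \<and> dist_h x y \<le> 1)\<^sup>*\<^sup>* a b"
    using ab unfolding connected_in_def by blast
  then have "\<forall>s\<in>S. eq_except0 s b \<longrightarrow> connected_in S a s"
  proof (induction rule: rtranclp_induct)
    case base
    show ?case
    proof (intro ballI impI)
      fix s assume s: "s \<in> S" "eq_except0 s a"
      have "diff_positions a a \<subseteq> {0}" by (simp add: diff_positions_def)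
      then have "diff_positions a s \<subseteq> {0, 0}"
        using diff_positions_eq_except0[OF eq_except0_refl s(2) refl] by blast
      then show "connected_in S a s" using connected_in_if_diff_positions_0[OF S a s(1)] by blast
    qed
  next
    case (step y z)
    show ?case
    proof (intro ballI impI)
      fix s assume s: "s \<in> S" "eq_except0 s z"
      obtain s' where s': "s' \<in> S" "eq_except0 s' y"
        using step(2) unfolding saturation0_def by blast
      obtain j where "diff_positions y z \<subseteq> {j}"
        using dist_h_le_1_obtain step(2) by blast
      moreover have "length y = length z"
        using step(2) unfolding saturation0_def gridN_def by auto
      ultimately have "diff_positions s' s \<subseteq> {0, j}"
        using diff_positions_eq_except0 s'(2) s(2) by blast
      then have "connected_in S s' s"
        using connected_in_if_diff_positions_0[OF S s'(1) s(1)] by blast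
      then show "connected_in S a s" using step.IH s' connected_in_trans by blast
    qed
  qed
  then show ?thesis using b eq_except0_refl by blast
qed

lemma f_bin_saturation0_in_P_ideal:
  assumes S: "one_switchable r S" and ab: "connected_in (saturation0 r S) a b"
  shows "(f_bin 0 a b :: 'k::field mpoly) \<in> P_ideal TYPE('k) r S"
proof -
  let ?T = "saturation0 r S" and ?a' = "sw 0 a b" and ?b' = "sw 0 b a"
  have aT: "a \<in> ?T" and bT: "b \<in> ?T"
    using ab unfolding connected_in_def by auto
  then have a: "a \<in> gridN r" and b: "b \<in> gridN r"
    unfolding saturation0_def by auto
  have a'T: "?a' \<in> ?T" and b'T: "?b' \<in> ?T"
    using sw0_in_saturation0 aT bT a b by blast+
  have "dist_h ?a' a \<le> 1"
    by (rule dist_h_le_1_if_eq_except0[OF eq_except0_sym[OF eq_except0_sw0[OF eq_except0_refl]]])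
  then have "connected_in ?T ?a' a" using connected_in_if_dist_h_le_1 a'T aT by blast
  moreover have "dist_h b ?b' \<le> 1"
    by (rule dist_h_le_1_if_eq_except0[OF eq_except0_sw0[OF eq_except0_refl]])
  then have "connected_in ?T b ?b'" using connected_in_if_dist_h_le_1 bT b'T by blast
  ultimately have a'b': "connected_in ?T ?a' ?b'" using ab connected_in_trans by blast
  consider "a \<in> S" "b \<in> S" | "?a' \<in> S" "?b' \<in> S" | "a \<notin> S \<or> b \<notin> S" "?a' \<notin> S \<or> ?b' \<notin> S"
    by blast
  then show ?thesis
  proof cases
    case 1
    then show ?thesis using f_bin_in_P_ideal connected_in_saturation0[OF S _ _ ab] by blast
  next
    case 2
    then have "(f_bin 0 ?a' ?b' :: 'k mpoly) \<in> P_ideal TYPE('k) r S"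
      using f_bin_in_P_ideal connected_in_saturation0[OF S _ _ a'b'] by blast
    then have "- (f_bin 0 ?a' ?b' :: 'k mpoly) \<in> P_ideal TYPE('k) r S"
      by (rule P_ideal_uminus)
    moreover have "length a = length b" using a b unfolding gridN_def by simp
    then have "- (f_bin 0 ?a' ?b' :: 'k mpoly) = f_bin 0 a b"
      using f_bin_sw_swap[of a b 0, where 'k = 'k] by simp
    ultimately show ?thesis by simp
  next
    case 3
    have "(var a * var b :: 'k mpoly) \<in> P_ideal TYPE('k) r S"
      using var_mult_var_in_P_ideal[OF a b 3(1)] .
    moreover have "(var ?a' * var ?b' :: 'k mpoly) \<in> P_ideal TYPE('k) r S"
      using var_mult_var_in_P_ideal[OF sw0_in_gridN[OF a b] sw0_in_gridN[OF b a] 3(2)] .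
    ultimately show ?thesis unfolding f_bin_def by (rule P_ideal_diff)
  qed
qed

lemma P_ideal_saturation0_subset:
  assumes "one_switchable r S"
  shows "P_ideal TYPE('k::field) r (saturation0 r S) \<subseteq> P_ideal TYPE('k) r S"
proof (rule P_ideal_subset_P_ideal)
  have "S \<subseteq> saturation0 r S"
    using assms subset_saturation0 unfolding one_switchable_def by blast
  then show "var a \<in> P_ideal TYPE('k) r S" if "a \<in> gridN r" "a \<notin> saturation0 r S" for a
    using var_in_P_ideal that by blast
  show "f_bin 0 a b \<in> P_ideal TYPE('k) r S" if "connected_in (saturation0 r S) a b" for a b
    using f_bin_saturation0_in_P_ideal[OF assms that] .
qed

theorem lemma4p16:
  fixes r :: "nat list" and S :: "nat list set"
  assumes "r \<noteq> []" and "\<forall>x\<in>set r. 0 < x"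
    and "maximal_one_switchable TYPE('k::field) r S"
  shows "\<forall>a\<in>S. \<forall>b\<in>gridN r. sw 0 a b \<in> S"
proof -
  have S: "one_switchable r S"
    using assms(3) unfolding maximal_one_switchable_def by blast
  then have S_sub: "S \<subseteq> saturation0 r S"
    using subset_saturation0 unfolding one_switchable_def by blast
  have "\<not> S \<subset> saturation0 r S"
    using assms(3) one_switchable_saturation0 P_ideal_saturation0_subset[OF S]
    unfolding maximal_one_switchable_def by blast
  then have "saturation0 r S = S" using S_sub by blast
  then show ?thesis using sw0_in_saturation0 S_sub by blast
qed

end
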